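(* Let $G$ be a planar graph embedded in the plane, let $F$ be a face of this embedding whose boundary is a cycle, and let $v_1,v_2,v_3,v_4 \in V(F)$ appear in this order along the boundary cycle of $F$. If $\max\{\mathrm{dist}_{G-E(F)}(v_1,v_3),\mathrm{dist}_{G-E(F)}(v_2,v_4)\}\leq 6$, then $\min\{\mathrm{dist}_{G-E(F)}(v_1,v_2),\mathrm{dist}_{G-E(F)}(v_3,v_4)\}\leq 6$.
   Context: $\mathrm{dist}_H(u,v)$ denotes the number of edges in a shortest $uv$-path in $H$ ($\infty$ if none exists). $V(F)$ and $E(F)$ denote the vertices and edges of the boundary cycle of $F$, and $G-E(F)$ is obtained from $G$ by deleting these edges. *)

theory Defs
  imports "HOL-Analysis.Analysis" "HOL-Library.Extended_Nat"
begin

definition simple_graph :: "'v set \<Rightarrow> 'v set set \<Rightarrow> bool" where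
  "simple_graph V E \<longleftrightarrow> finite V \<and>
     (\<forall>e\<in>E. \<exists>u v. u \<noteq> v \<and> e = {u, v} \<and> u \<in> V \<and> v \<in> V)"

definition is_walk :: "'v set \<Rightarrow> 'v set set \<Rightarrow> 'v list \<Rightarrow> bool" where
  "is_walk V E xs \<longleftrightarrow> xs \<noteq> [] \<and> set xs \<subseteq> V \<and>
     (\<forall>i. Suc i < length xs \<longrightarrow> {xs ! i, xs ! Suc i} \<in> E)"

definition graph_dist :: "'v set \<Rightarrow> 'v set set \<Rightarrow> 'v \<Rightarrow> 'v \<Rightarrow> enat" where
  "graph_dist V E u v = Inf {enat (length xs - 1) | xs.
       is_walk V E xs \<and> hd xs = u \<and> last xs = v}"

definition plane_embedding ::
  "'v set \<Rightarrow> 'v set set \<Rightarrow> ('v \<Rightarrow> complex) \<Rightarrow> ('v set \<Rightarrow> real \<Rightarrow> complex) \<Rightarrow> bool" where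
  "plane_embedding V E pos \<gamma> \<longleftrightarrow> inj_on pos V \<and>
     (\<forall>e\<in>E. arc (\<gamma> e) \<and>
        (\<exists>u v. e = {u, v} \<and> pathstart (\<gamma> e) = pos u \<and> pathfinish (\<gamma> e) = pos v) \<and>
        path_image (\<gamma> e) \<inter> pos ` V \<subseteq> pos ` e) \<and>
     (\<forall>e\<in>E. \<forall>e'\<in>E. e \<noteq> e' \<longrightarrow> path_image (\<gamma> e) \<inter> path_image (\<gamma> e') \<subseteq> pos ` (e \<inter> e'))"

definition drawing ::
  "'v set \<Rightarrow> 'v set set \<Rightarrow> ('v \<Rightarrow> complex) \<Rightarrow> ('v set \<Rightarrow> real \<Rightarrow> complex) \<Rightarrow> complex set" where
  "drawing V E pos \<gamma> = pos ` V \<union> (\<Union>e\<in>E. path_image (\<gamma> e))"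

definition cycle_edges :: "'v list \<Rightarrow> 'v set set" where
  "cycle_edges cs = {{cs ! i, cs ! ((i + 1) mod length cs)} | i. i < length cs}"

definition is_cycle :: "'v set \<Rightarrow> 'v set set \<Rightarrow> 'v list \<Rightarrow> bool" where
  "is_cycle V E cs \<longleftrightarrow> length cs \<ge> 3 \<and> distinct cs \<and> set cs \<subseteq> V \<and> cycle_edges cs \<subseteq> E"

definition face_bounded_by_cycle ::
  "'v set \<Rightarrow> 'v set set \<Rightarrow> ('v \<Rightarrow> complex) \<Rightarrow> ('v set \<Rightarrow> real \<Rightarrow> complex)
   \<Rightarrow> complex set \<Rightarrow> 'v list \<Rightarrow> bool" where
  "face_bounded_by_cycle V E pos \<gamma> F cs \<longleftrightarrow>
     F \<in> components (- drawing V E pos \<gamma>) \<and> is_cycle V E cs \<and>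
     frontier F = drawing (set cs) (cycle_edges cs) pos \<gamma>"

end

theory Submission
  imports Defs
begin

text \<open>Take shortest walks \<open>W13\<close> from \<open>v1\<close> to \<open>v3\<close> and \<open>W24\<close> from \<open>v2\<close> to \<open>v4\<close> in
  \<open>G - E(F)\<close>. They share a vertex: otherwise \<open>W13\<close> contains a chord \<open>P\<close> of the boundary
  cycle whose ends separate \<open>v2\<close> from \<open>v4\<close>, and \<open>W24\<close> contains a path \<open>Q\<close>, disjoint from
  \<open>P\<close>, joining the two arcs into which the ends of \<open>P\<close> cut the cycle. By the Jordan curve
  theorem the face \<open>F\<close> is one side of the cycle and \<open>P\<close>, \<open>Q\<close> lie on the other side, where
  \<open>P\<close> separates the two arcs (Janiszewski's theorem handles the unbounded side), so \<open>Q\<close>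
  cannot exist. Splitting both walks at a common vertex \<open>w\<close> and using the triangle
  inequality gives \<open>d(v1,v2) + d(v3,v4) \<le> |W13| + |W24| \<le> 12\<close>.\<close>

section \<open>Walks and distances\<close>

fun walk_edges :: "'v list \<Rightarrow> 'v set set" where
  "walk_edges (x # y # zs) = insert {x, y} (walk_edges (y # zs))"
| "walk_edges _ = {}"

lemma walk_edges_conv_nth: "walk_edges xs = {{xs ! i, xs ! Suc i} | i. Suc i < length xs}"
proof (induction xs rule: walk_edges.induct)
  case (1 x y zs)
  let ?xs = "x # y # zs"
  have "{{?xs ! i, ?xs ! Suc i} | i. Suc i < length ?xs}
      = insert {x, y} {{(y # zs) ! i, (y # zs) ! Suc i} | i. Suc i < length (y # zs)}"
  proof (intro set_eqI iffI)
    fix e assume "e \<in> {{?xs ! i, ?xs ! Suc i} | i. Suc i < length ?xs}"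
    then obtain i where "e = {?xs ! i, ?xs ! Suc i}" "Suc i < length ?xs" by blast
    then show "e \<in> insert {x, y} {{(y # zs) ! i, (y # zs) ! Suc i} | i. Suc i < length (y # zs)}"
      by (cases i) auto
  next
    fix e assume "e \<in> insert {x, y} {{(y # zs) ! i, (y # zs) ! Suc i} | i. Suc i < length (y # zs)}"
    then consider "e = {x, y}"
      | i where "e = {(y # zs) ! i, (y # zs) ! Suc i}" "Suc i < length (y # zs)"
      by blast
    then show "e \<in> {{?xs ! i, ?xs ! Suc i} | i. Suc i < length ?xs}"
    proof cases
      case 1 then show ?thesis by (intro CollectI exI[of _ 0]) simp
    next
      case 2 then show ?thesis by (intro CollectI exI[of _ "Suc i"]) simp
    qed
  qed
  with 1 show ?case by simp
qed auto

lemma is_walk_iff: "is_walk V E xs \<longleftrightarrow> xs \<noteq> [] \<and> set xs \<subseteq> V \<and> walk_edges xs \<subseteq> E"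
  by (auto simp: is_walk_def walk_edges_conv_nth)

lemma walk_edges_subset_set: "e \<in> walk_edges xs \<Longrightarrow> e \<subseteq> set xs"
  by (induction xs rule: walk_edges.induct) auto

lemma walk_edges_nonempty: "e \<in> walk_edges xs \<Longrightarrow> e \<noteq> {}"
  by (induction xs rule: walk_edges.induct) auto

lemma walk_edges_disjoint:
  assumes "set xs \<inter> set ys = {}"
  shows "walk_edges xs \<inter> walk_edges ys = {}"
proof (rule ccontr)
  assume "walk_edges xs \<inter> walk_edges ys \<noteq> {}"
  then obtain e where "e \<in> walk_edges xs" "e \<in> walk_edges ys"
    by blast
  then have "e \<subseteq> set xs \<inter> set ys" "e \<noteq> {}"
    using walk_edges_subset_set walk_edges_nonempty by blast+
  then show False
    using assms by blast
qed

lemma walk_edges_append: "walk_edges (xs @ y # ys) = walk_edges (xs @ [y]) \<union> walk_edges (y # ys)"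
  by (induction xs rule: walk_edges.induct) auto

lemma walk_edges_rev: "walk_edges (rev xs) = walk_edges xs"
proof (induction xs rule: walk_edges.induct)
  case (1 x y zs)
  then show ?case
    using walk_edges_append[of "rev zs" y "[x]"] by (auto simp: insert_commute)
qed auto

lemma walk_edges_take: "walk_edges (take k xs) \<subseteq> walk_edges xs"
  unfolding walk_edges_conv_nth by fastforce

lemma walk_edges_drop: "walk_edges (drop k xs) \<subseteq> walk_edges xs"
proof
  fix e assume "e \<in> walk_edges (drop k xs)"
  then obtain i where "e = {xs ! (k + i), xs ! Suc (k + i)}" "Suc (k + i) < length xs"
    unfolding walk_edges_conv_nth by auto
  then show "e \<in> walk_edges xs" unfolding walk_edges_conv_nth by blast
qed

lemma walk_edges_cover: "2 \<le> length xs \<Longrightarrow> \<Union> (walk_edges xs) = set xs"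
proof (induction xs rule: walk_edges.induct)
  case (1 x y zs)
  then show ?case by (cases zs) auto
qed auto

lemma walk_edges_join:
  assumes "xs \<noteq> []" "ys \<noteq> []" "last xs = hd ys"
  shows "walk_edges (xs @ tl ys) = walk_edges xs \<union> walk_edges ys"
proof -
  have "butlast xs @ [last xs] = xs"
    using assms(1) by (rule append_butlast_last_id)
  moreover have "last xs # tl ys = ys"
    unfolding assms(3) using assms(2) by (rule list.collapse)
  ultimately show ?thesis
    using walk_edges_append[of "butlast xs" "last xs" "tl ys"]
    by (metis append.assoc append_Cons append_Nil)
qed

lemma is_walk_join:
  assumes "is_walk V E xs" "is_walk V E ys" "last xs = hd ys"
  shows "is_walk V E (xs @ tl ys)" "hd (xs @ tl ys) = hd xs" "last (xs @ tl ys) = last ys"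
    "length (xs @ tl ys) - 1 = (length xs - 1) + (length ys - 1)"
proof -
  have ne: "xs \<noteq> []" "ys \<noteq> []"
    using assms(1,2) by (auto simp: is_walk_iff)
  show "is_walk V E (xs @ tl ys)"
    using assms walk_edges_join[OF ne assms(3)] by (auto simp: is_walk_iff dest: list.set_sel(2))
  show "hd (xs @ tl ys) = hd xs"
    using ne by simp
  show "last (xs @ tl ys) = last ys"
    using ne assms(3) by (cases ys) auto
  show "length (xs @ tl ys) - 1 = (length xs - 1) + (length ys - 1)"
    using ne by (cases xs) auto
qed

lemma is_walk_take:
  assumes "is_walk V E xs" "j < length xs"
  shows "is_walk V E (take (Suc j) xs)" "hd (take (Suc j) xs) = hd xs"
    "last (take (Suc j) xs) = xs ! j"
    "length (take (Suc j) xs) - 1 = j"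
proof -
  show "is_walk V E (take (Suc j) xs)"
    using assms walk_edges_take[of "Suc j" xs] by (auto simp: is_walk_iff dest: in_set_takeD)
  show "hd (take (Suc j) xs) = hd xs"
    using assms(2) by (cases xs) auto
  show "last (take (Suc j) xs) = xs ! j" "length (take (Suc j) xs) - 1 = j"
    using assms(2) by (simp_all add: take_Suc_conv_app_nth)
qed

lemma is_walk_drop:
  assumes "is_walk V E xs" "j < length xs"
  shows "is_walk V E (drop j xs)" "hd (drop j xs) = xs ! j" "last (drop j xs) = last xs"
    "length (drop j xs) - 1 = length xs - 1 - j"
  using assms walk_edges_drop[of j xs]
  by (auto simp: is_walk_iff hd_drop_conv_nth dest: in_set_dropD)

lemma is_walk_rev: "is_walk V E (rev xs) \<longleftrightarrow> is_walk V E xs"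
  by (simp add: is_walk_iff walk_edges_rev)

lemma graph_dist_le_walk:
  assumes "is_walk V E xs"
  shows "graph_dist V E (hd xs) (last xs) \<le> enat (length xs - 1)"
  unfolding graph_dist_def by (rule Inf_lower) (use assms in blast)

lemma shortest_walk:
  assumes "graph_dist V E u v \<noteq> \<infinity>"
  obtains xs where "is_walk V E xs" "hd xs = u" "last xs = v"
    "graph_dist V E u v = enat (length xs - 1)"
proof -
  let ?lengths = "{enat (length xs - 1) | xs. is_walk V E xs \<and> hd xs = u \<and> last xs = v}"
  have "?lengths \<noteq> {}"
    using assms unfolding graph_dist_def Inf_enat_def by (auto split: if_splits)
  then have "Inf ?lengths \<in> ?lengths"
    unfolding Inf_enat_def by (auto intro: LeastI)
  then show thesis
    using that unfolding graph_dist_def by auto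
qed

lemma shortest_walk_distinct:
  assumes walk: "is_walk V E xs"
    and shortest: "graph_dist V E (hd xs) (last xs) = enat (length xs - 1)"
  shows "distinct xs"
proof (rule ccontr)
  assume "\<not> distinct xs"
  then obtain i j where ij: "i < j" "j < length xs" "xs ! i = xs ! j"
    by (metis distinct_conv_nth linorder_neqE_nat)
  note prefix = is_walk_take[OF walk, of i] and suffix = is_walk_drop[OF walk ij(2)]
  have "last (take (Suc i) xs) = hd (drop j xs)"
    using prefix(3) suffix(2) ij by simp
  note shortcut = is_walk_join[OF prefix(1) suffix(1) this]
  have "graph_dist V E (hd xs) (last xs) \<le> enat (i + (length xs - 1 - j))"
    using graph_dist_le_walk[OF shortcut(1)] shortcut(2-4) prefix(2,4) suffix(3,4) ij by simp
  then show False
    using shortest ij by simp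
qed

lemma graph_dist_commute: "graph_dist V E u v = graph_dist V E v u"
proof -
  have le: "graph_dist V E v u \<le> graph_dist V E u v" for u v
  proof (cases "graph_dist V E u v = \<infinity>")
    case False
    then obtain xs where "is_walk V E xs" "hd xs = u" "last xs = v"
      "graph_dist V E u v = enat (length xs - 1)"
      by (rule shortest_walk)
    then show ?thesis
      using graph_dist_le_walk[of V E "rev xs"] by (simp add: is_walk_rev hd_rev last_rev)
  qed simp
  show ?thesis
    using le[of u v] le[of v u] by (rule antisym)
qed

lemma graph_dist_triangle: "graph_dist V E u w \<le> graph_dist V E u v + graph_dist V E v w"
proof (cases "graph_dist V E u v = \<infinity> \<or> graph_dist V E v w = \<infinity>")
  case False
  then obtain xs ys where xs: "is_walk V E xs" "hd xs = u" "last xs = v"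
      "graph_dist V E u v = enat (length xs - 1)"
    and ys: "is_walk V E ys" "hd ys = v" "last ys = w" "graph_dist V E v w = enat (length ys - 1)"
    by (meson shortest_walk)
  then have "last xs = hd ys"
    by simp
  note joined = is_walk_join[OF xs(1) ys(1) this]
  show ?thesis
    using graph_dist_le_walk[OF joined(1)] joined(2-4) xs ys by simp
qed auto

lemma graph_dist_through_walk_vertex:
  assumes "is_walk V E xs" "w \<in> set xs"
  shows "graph_dist V E (hd xs) w + graph_dist V E w (last xs) \<le> enat (length xs - 1)"
proof -
  obtain j where j: "j < length xs" "w = xs ! j"
    using assms(2) by (auto simp: in_set_conv_nth)
  note prefix = is_walk_take[OF assms(1) j(1)] and suffix = is_walk_drop[OF assms(1) j(1)]
  have "graph_dist V E (hd xs) w + graph_dist V E w (last xs) \<le> enat j + enat (length xs - 1 - j)"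
    using add_mono[OF graph_dist_le_walk[OF prefix(1)] graph_dist_le_walk[OF suffix(1)]]
      prefix(2-4) suffix(2-4) j(2) by simp
  then show ?thesis
    using j(1) by simp
qed

lemma graph_dist_meeting_walks:
  assumes "is_walk V E xs" "is_walk V E ys" "w \<in> set xs" "w \<in> set ys"
  shows "graph_dist V E (hd xs) (hd ys) + graph_dist V E (last xs) (last ys)
    \<le> enat (length xs - 1) + enat (length ys - 1)"
proof -
  let ?d = "graph_dist V E"
  have "?d (hd xs) (hd ys) + ?d (last xs) (last ys)
      \<le> (?d (hd xs) w + ?d w (hd ys)) + (?d (last xs) w + ?d w (last ys))"
    by (intro add_mono graph_dist_triangle)
  also have "\<dots> = (?d (hd xs) w + ?d w (last xs)) + (?d (hd ys) w + ?d w (last ys))"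
    by (simp add: graph_dist_commute[of V E _ w] ac_simps)
  also have "\<dots> \<le> enat (length xs - 1) + enat (length ys - 1)"
    using assms by (intro add_mono graph_dist_through_walk_vertex)
  finally show ?thesis .
qed

lemma enat_min_le_if_add_le:
  fixes a b c :: enat
  assumes "a + b \<le> c + c"
  shows "min a b \<le> c"
  using assms by (cases a; cases b; cases c) auto

section \<open>Theta graphs in the plane\<close>

lemma connected_subset_inside_or_outside:
  fixes X :: "'a::real_normed_vector set"
  assumes "closed X" "connected S" "S \<inter> X = {}"
  shows "S \<subseteq> inside X \<or> S \<subseteq> outside X"
  using connectedD[OF assms(2) open_inside[OF assms(1)] open_outside[OF assms(1)]] assms(3)
    inside_Int_outside[of X] inside_Un_outside[of X] by blast

lemma closure_point_in_inside:
  fixes X :: "'a::real_normed_vector set"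
  assumes "closed X" "T \<subseteq> inside X" "x \<in> closure T" "x \<notin> X"
  shows "x \<in> inside X"
  using closure_mono[OF assms(2)] closure_inside_subset[OF assms(1)] assms(3,4) by blast

lemma connected_subset_inside_if_touches:
  fixes X :: "'a::real_normed_vector set"
  assumes "closed X" "connected S" "S \<inter> X = {}" "x \<in> closure S" "x \<in> inside X"
  shows "S \<subseteq> inside X"
proof -
  have "S \<inter> inside X \<noteq> {}"
    using assms(4,5) open_Int_closure_eq_empty[OF open_inside[OF assms(1)], of S] by blast
  then show ?thesis
    using connected_subset_inside_or_outside[OF assms(1-3)] inside_Int_outside[of X] by blast
qed

lemma connected_subset_outside_if_touches:
  fixes X :: "'a::real_normed_vector set"
  assumes "closed X" "connected S" "S \<inter> X = {}" "x \<in> closure S" "x \<in> outside X"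
  shows "S \<subseteq> outside X"
proof -
  have "S \<inter> outside X \<noteq> {}"
    using assms(4,5) open_Int_closure_eq_empty[OF open_outside[OF assms(1)], of S] by blast
  then show ?thesis
    using connected_subset_inside_or_outside[OF assms(1-3)] inside_Int_outside[of X] by blast
qed

lemma connected_open_subset_eq:
  assumes "connected U" "open F" "F \<subseteq> U" "F \<noteq> {}" "frontier F \<inter> U = {}"
  shows "F = U"
  using connected_Int_frontier[OF assms(1), of F] assms(2-5) by auto

lemma arc_interior:
  fixes g :: "real \<Rightarrow> 'a::real_normed_vector"
  assumes "arc g"
  shows "connected (path_image g - {pathstart g, pathfinish g})"
    and "path_image g \<subseteq> closure (path_image g - {pathstart g, pathfinish g})"
proof -
  have inj: "inj_on g {0..1}" and cont: "continuous_on {0..1} g"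
    using assms by (auto simp: arc_def path_def)
  have "g t \<noteq> g 0" "g t \<noteq> g 1" if "0 < t" "t < 1" for t
    using inj_onD[OF inj, of t 0] inj_onD[OF inj, of t 1] that by auto
  then have eq: "path_image g - {pathstart g, pathfinish g} = g ` {0<..<1}"
    by (fastforce simp: path_image_def pathstart_def pathfinish_def image_iff
        less_eq_real_def)
  show "connected (path_image g - {pathstart g, pathfinish g})"
    unfolding eq by (rule connected_continuous_image) (auto intro: continuous_on_subset[OF cont])
  show "path_image g \<subseteq> closure (path_image g - {pathstart g, pathfinish g})"
    unfolding eq using continuous_image_closure_subset[OF cont, of "{0<..<1}"]
    by (simp add: closure_greaterThanLessThan path_image_def)
qed

lemma Jordan_two_arcs:
  fixes c1 c2 :: "real \<Rightarrow> complex"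
  assumes "arc c1" "arc c2" "pathstart c1 = p" "pathfinish c1 = q"
    "pathstart c2 = p" "pathfinish c2 = q" "path_image c1 \<inter> path_image c2 = {p, q}"
  shows "inside (path_image c1 \<union> path_image c2) \<noteq> {}"
    and "connected (inside (path_image c1 \<union> path_image c2))"
    and "connected (outside (path_image c1 \<union> path_image c2))"
    and "frontier (inside (path_image c1 \<union> path_image c2)) = path_image c1 \<union> path_image c2"
proof -
  have "simple_path (c1 +++ reversepath c2)"
    using assms by (intro simple_path_join_loop) (auto simp: arc_reversepath)
  moreover have "path_image (c1 +++ reversepath c2) = path_image c1 \<union> path_image c2"
    using assms by (simp add: path_image_join)
  moreover have "pathfinish (c1 +++ reversepath c2) = pathstart (c1 +++ reversepath c2)"
    using assms by simp
  ultimately show "inside (path_image c1 \<union> path_image c2) \<noteq> {}"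
    and "connected (inside (path_image c1 \<union> path_image c2))"
    and "connected (outside (path_image c1 \<union> path_image c2))"
    and "frontier (inside (path_image c1 \<union> path_image c2)) = path_image c1 \<union> path_image c2"
    using Jordan_inside_outside[of "c1 +++ reversepath c2"] by auto
qed

lemma closed_arc_images_Un:
  fixes c1 c2 :: "real \<Rightarrow> 'a::real_normed_vector"
  shows "arc c1 \<Longrightarrow> arc c2 \<Longrightarrow> closed (path_image c1 \<union> path_image c2)"
  by (simp add: arc_imp_path closed_Un closed_path_image)

locale theta_graph =
  fixes p q :: complex and c1 c2 a :: "real \<Rightarrow> complex"
  assumes arcs: "arc c1" "arc c2" "arc a"
    and starts: "pathstart c1 = p" "pathstart c2 = p" "pathstart a = p"
    and finishes: "pathfinish c1 = q" "pathfinish c2 = q" "pathfinish a = q"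
    and c1_c2: "path_image c1 \<inter> path_image c2 = {p, q}"
    and c1_a: "path_image c1 \<inter> path_image a = {p, q}"
    and c2_a: "path_image c2 \<inter> path_image a = {p, q}"
begin

lemma swap: "theta_graph p q c2 c1 a"
  by unfold_locales (use arcs starts finishes c1_c2 c1_a c2_a in auto)

lemma simple_arcs: "simple_path c1" "simple_path c2" "simple_path a"
  using arcs by (simp_all add: arc_imp_simple_path)

lemma ends_neq: "p \<noteq> q"
  using arc_distinct_ends[OF arcs(1)] starts finishes by simp

lemma ends_in_images:
  "p \<in> path_image c1" "q \<in> path_image c1" "p \<in> path_image c2" "q \<in> path_image c2"
  "p \<in> path_image a" "q \<in> path_image a"
  using c1_c2 c1_a by auto

lemma arc_interiors:
  "connected (path_image c1 - {p, q})" "path_image c1 \<subseteq> closure (path_image c1 - {p, q})"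
  "connected (path_image c2 - {p, q})" "path_image c2 \<subseteq> closure (path_image c2 - {p, q})"
  "connected (path_image a - {p, q})" "path_image a \<subseteq> closure (path_image a - {p, q})"
  using arc_interior[OF arcs(1)] arc_interior[OF arcs(2)] arc_interior[OF arcs(3)] starts finishes
  by auto

lemma arc_interiors_nonempty:
  "path_image c1 - {p, q} \<noteq> {}" "path_image c2 - {p, q} \<noteq> {}" "path_image a - {p, q} \<noteq> {}"
  using arc_interiors ends_in_images by fastforce+

lemma closed_cycles:
  "closed (path_image c1 \<union> path_image c2)" "closed (path_image c1 \<union> path_image a)"
  "closed (path_image c2 \<union> path_image a)"
  using arcs by (simp_all add: closed_arc_images_Un)

lemmas Jordan_c1_c2 =
  Jordan_two_arcs[OF arcs(1,2) starts(1) finishes(1) starts(2) finishes(2) c1_c2]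
lemmas Jordan_c1_a =
  Jordan_two_arcs[OF arcs(1,3) starts(1) finishes(1) starts(3) finishes(3) c1_a]
lemmas Jordan_c2_a =
  Jordan_two_arcs[OF arcs(2,3) starts(2) finishes(2) starts(3) finishes(3) c2_a]

text \<open>If \<open>c2\<close> runs inside the cycle \<open>c1 \<union> a\<close>, the region inside \<open>c1 \<union> a\<close> is cut by \<open>c2\<close>
  into the inside of \<open>c1 \<union> c2\<close> and the inside of \<open>a \<union> c2\<close>; a set outside \<open>c1 \<union> c2\<close> that
  approaches \<open>c2\<close> is thus trapped inside \<open>a \<union> c2\<close>, whose closure misses \<open>c1\<close>.\<close>
lemma nested_arc_blocks:
  assumes nested: "path_image c2 - {p, q} \<subseteq> inside (path_image c1 \<union> path_image a)"
    and B: "connected B" "B \<inter> (path_image c1 \<union> path_image c2 \<union> path_image a) = {}"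
      "B \<inter> inside (path_image c1 \<union> path_image c2) = {}"
    and r: "r \<in> path_image c1 - {p, q}" "r \<in> closure B"
    and s: "s \<in> path_image c2 - {p, q}" "s \<in> closure B"
  shows False
proof -
  let ?C1 = "path_image c1" and ?C2 = "path_image c2" and ?A = "path_image a"
  obtain split: "inside (?C1 \<union> ?C2) \<union> inside (?A \<union> ?C2) \<union> (?C2 - {p, q}) = inside (?C1 \<union> ?A)"
  proof (rule split_inside_simple_closed_curve[OF simple_arcs(1) starts(1) finishes(1)
        simple_arcs(3) starts(3) finishes(3) simple_arcs(2) starts(2) finishes(2) ends_neq c1_a])
    show "?C1 \<inter> ?C2 = {p, q}" "?A \<inter> ?C2 = {p, q}"
      using c1_c2 c2_a by blast+
    show "?C2 \<inter> inside (?C1 \<union> ?A) \<noteq> {}"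
      using nested s(1) by blast
  qed
  have "B \<subseteq> inside (?C1 \<union> ?A)"
    using connected_subset_inside_if_touches[OF closed_cycles(2) B(1) _ s(2)] B(2) nested s(1)
    by blast
  then have "B \<subseteq> inside (?A \<union> ?C2)"
    using split B(2,3) by blast
  then have "r \<in> inside (?A \<union> ?C2)"
    using closure_point_in_inside[OF _ _ r(2)] closed_cycles(3) r(1) c1_c2 c1_a
    by (metis Diff_iff IntI Un_iff sup_commute)
  then have "r \<in> inside (?C1 \<union> ?A)"
    using split by blast
  then show False
    using r(1) inside_no_overlap by blast
qed

text \<open>By Janiszewski's theorem a point inside \<open>c1 \<union> c2\<close> could otherwise be joined to a far away
  point in the complement of the theta graph, leaving the bounded component.\<close>
lemma inside_not_outside_both:
  assumes in1: "inside (path_image c1 \<union> path_image c2) \<subseteq> outside (path_image c1 \<union> path_image a)"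
    and in2: "inside (path_image c1 \<union> path_image c2) \<subseteq> outside (path_image c2 \<union> path_image a)"
  shows False
proof -
  let ?C1 = "path_image c1" and ?C2 = "path_image c2" and ?A = "path_image a"
  let ?C = "?C1 \<union> ?C2"
  obtain z where z: "z \<in> inside ?C" using Jordan_c1_c2(1) by blast
  have "bounded (?C \<union> ?A)"
    using arcs by (simp add: arc_imp_path bounded_path_image)
  then obtain w where w: "w \<in> outside (?C \<union> ?A)"
    using outside_bounded_nonempty by blast
  have "connected_component (- (?C1 \<union> ?A)) z w"
  proof (rule connected_componentI[OF Jordan_c1_a(3)])
    show "outside (?C1 \<union> ?A) \<subseteq> - (?C1 \<union> ?A)" using outside_no_overlap by blast
    show "z \<in> outside (?C1 \<union> ?A)" using in1 z by blast
    show "w \<in> outside (?C1 \<union> ?A)" using w outside_mono[of "?C1 \<union> ?A" "?C \<union> ?A"] by blast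
  qed
  moreover have "connected_component (- (?C2 \<union> ?A)) z w"
  proof (rule connected_componentI[OF Jordan_c2_a(3)])
    show "outside (?C2 \<union> ?A) \<subseteq> - (?C2 \<union> ?A)" using outside_no_overlap by blast
    show "z \<in> outside (?C2 \<union> ?A)" using in2 z by blast
    show "w \<in> outside (?C2 \<union> ?A)" using w outside_mono[of "?C2 \<union> ?A" "?C \<union> ?A"] by blast
  qed
  moreover have "(?C1 \<union> ?A) \<inter> (?C2 \<union> ?A) = ?A"
    using c1_c2 ends_in_images(5,6) by auto
  moreover have "compact (?C1 \<union> ?A)"
    using arcs by (simp add: arc_imp_path compact_path_image compact_Un)
  ultimately have "connected_component (- ((?C1 \<union> ?A) \<union> (?C2 \<union> ?A))) z w"
    using Janiszewski[OF _ closed_cycles(3), of "?C1 \<union> ?A" z w] connected_arc_image[OF arcs(3)]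
    by argo
  then have "connected_component (- ?C) z w"
    by (rule connected_component_of_subset) blast
  then have "w \<in> inside ?C"
    using z connected_component_in[of "- ?C" z w] unfolding inside_def
    by (auto simp: connected_component_eq)
  moreover have "w \<in> outside ?C"
    using w outside_mono[of ?C "?C \<union> ?A"] by blast
  ultimately show False
    using inside_Int_outside[of ?C] by blast
qed

lemma outer_arc_nests:
  assumes outer: "(path_image a - {p, q}) \<inter> inside (path_image c1 \<union> path_image c2) = {}"
  shows "path_image c2 - {p, q} \<subseteq> inside (path_image c1 \<union> path_image a)
    \<or> path_image c1 - {p, q} \<subseteq> inside (path_image c2 \<union> path_image a)"
proof (rule ccontr)
  let ?C1 = "path_image c1" and ?C2 = "path_image c2" and ?A = "path_image a"
  let ?C = "?C1 \<union> ?C2"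
  assume not_nested: "\<not> ?thesis"
  have "?C2 - {p, q} \<subseteq> inside (?C1 \<union> ?A) \<or> ?C2 - {p, q} \<subseteq> outside (?C1 \<union> ?A)"
    by (rule connected_subset_inside_or_outside[OF closed_cycles(2) arc_interiors(3)])
      (use c1_c2 c2_a in blast)
  then have out2: "?C2 - {p, q} \<subseteq> outside (?C1 \<union> ?A)"
    using not_nested by blast
  have "?C1 - {p, q} \<subseteq> inside (?C2 \<union> ?A) \<or> ?C1 - {p, q} \<subseteq> outside (?C2 \<union> ?A)"
    by (rule connected_subset_inside_or_outside[OF closed_cycles(3) arc_interiors(1)])
      (use c1_c2 c1_a in blast)
  then have out1: "?C1 - {p, q} \<subseteq> outside (?C2 \<union> ?A)"
    using not_nested by blast
  have frontier_inside: "?C \<subseteq> closure (inside ?C)"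
    using Jordan_c1_c2(4) closure_Un_frontier[of "inside ?C"] by blast
  have disj: "inside ?C \<inter> (?C1 \<union> ?A) = {}" "inside ?C \<inter> (?C2 \<union> ?A) = {}"
    using outer ends_in_images inside_no_overlap[of ?C] by blast+
  obtain s where s: "s \<in> ?C2 - {p, q}" using arc_interiors_nonempty(2) by blast
  obtain r where r: "r \<in> ?C1 - {p, q}" using arc_interiors_nonempty(1) by blast
  have "inside ?C \<subseteq> outside (?C1 \<union> ?A)"
  proof (rule connected_subset_outside_if_touches[OF closed_cycles(2) Jordan_c1_c2(2) disj(1)])
    show "s \<in> closure (inside ?C)" using frontier_inside s by blast
    show "s \<in> outside (?C1 \<union> ?A)" using out2 s by blast
  qed
  moreover have "inside ?C \<subseteq> outside (?C2 \<union> ?A)"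
  proof (rule connected_subset_outside_if_touches[OF closed_cycles(3) Jordan_c1_c2(2) disj(2)])
    show "r \<in> closure (inside ?C)" using frontier_inside r by blast
    show "r \<in> outside (?C2 \<union> ?A)" using out1 r by blast
  qed
  ultimately show False
    by (rule inside_not_outside_both)
qed

text \<open>An arc \<open>a\<close> inside the cycle \<open>c1 \<union> c2\<close> splits its inside into the insides of
  \<open>c1 \<union> a\<close> and \<open>c2 \<union> a\<close>, whose closures miss \<open>c2 - {p, q}\<close> and \<open>c1 - {p, q}\<close> respectively.\<close>
lemma inner_arc_separates:
  assumes inner: "path_image a - {p, q} \<subseteq> inside (path_image c1 \<union> path_image c2)"
    and B: "connected B" "B \<subseteq> inside (path_image c1 \<union> path_image c2)" "B \<inter> path_image a = {}"
    and r: "r \<in> path_image c1 - {p, q}" "r \<in> closure B"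
    and s: "s \<in> path_image c2 - {p, q}" "s \<in> closure B"
  shows False
proof -
  let ?C1 = "path_image c1" and ?C2 = "path_image c2" and ?A = "path_image a"
  let ?C = "?C1 \<union> ?C2"
  obtain disj: "inside (?C1 \<union> ?A) \<inter> inside (?C2 \<union> ?A) = {}"
    and split: "inside (?C1 \<union> ?A) \<union> inside (?C2 \<union> ?A) \<union> (?A - {p, q}) = inside ?C"
  proof (rule split_inside_simple_closed_curve[OF simple_arcs(1) starts(1) finishes(1)
        simple_arcs(2) starts(2) finishes(2) simple_arcs(3) starts(3) finishes(3) ends_neq
        c1_c2 c1_a c2_a])
    show "?A \<inter> inside ?C \<noteq> {}"
      using inner arc_interiors_nonempty(3) by blast
  qed
  have "B \<subseteq> inside (?C1 \<union> ?A) \<union> inside (?C2 \<union> ?A)"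
    using B(2,3) split by blast
  then have "B \<subseteq> inside (?C1 \<union> ?A) \<or> B \<subseteq> inside (?C2 \<union> ?A)"
    using connectedD[OF B(1) open_inside[OF closed_cycles(2)] open_inside[OF closed_cycles(3)]]
      disj by blast
  then show False
  proof
    assume "B \<subseteq> inside (?C1 \<union> ?A)"
    then have "s \<in> inside (?C1 \<union> ?A)"
      using closure_point_in_inside[OF closed_cycles(2) _ s(2)] s(1) c1_c2 c2_a by blast
    then show False
      using split s(1) inside_no_overlap[of ?C] by blast
  next
    assume "B \<subseteq> inside (?C2 \<union> ?A)"
    then have "r \<in> inside (?C2 \<union> ?A)"
      using closure_point_in_inside[OF closed_cycles(3) _ r(2)] r(1) c1_c2 c1_a by blast
    then show False
      using split r(1) inside_no_overlap[of ?C] by blast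
  qed
qed

lemma no_connected_set_near_both_arcs:
  assumes B: "connected B" "B \<inter> (path_image c1 \<union> path_image c2 \<union> path_image a) = {}"
    and r: "r \<in> path_image c1 - {p, q}" "r \<in> closure B"
    and s: "s \<in> path_image c2 - {p, q}" "s \<in> closure B"
    and same_side:
      "B \<subseteq> inside (path_image c1 \<union> path_image c2)
         \<and> path_image a - {p, q} \<subseteq> inside (path_image c1 \<union> path_image c2)
       \<or> B \<inter> inside (path_image c1 \<union> path_image c2) = {}
         \<and> (path_image a - {p, q}) \<inter> inside (path_image c1 \<union> path_image c2) = {}"
  shows False
  using same_side
proof
  assume "B \<subseteq> inside (path_image c1 \<union> path_image c2)
    \<and> path_image a - {p, q} \<subseteq> inside (path_image c1 \<union> path_image c2)"
  then show False
    using inner_arc_separates B r s by blast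
next
  interpret swapped: theta_graph p q c2 c1 a by (rule swap)
  assume outside: "B \<inter> inside (path_image c1 \<union> path_image c2) = {}
    \<and> (path_image a - {p, q}) \<inter> inside (path_image c1 \<union> path_image c2) = {}"
  then consider "path_image c2 - {p, q} \<subseteq> inside (path_image c1 \<union> path_image a)"
    | "path_image c1 - {p, q} \<subseteq> inside (path_image c2 \<union> path_image a)"
    using outer_arc_nests by blast
  then show False
  proof cases
    case 1
    then show False using nested_arc_blocks B outside r s by blast
  next
    case 2
    then show False
      using swapped.nested_arc_blocks[of B s r] B outside r s by (simp add: Un_ac)
  qed
qed

text \<open>The face \<open>F\<close> is one side of the cycle \<open>c1 \<union> c2\<close>; the arcs \<open>a\<close> and \<open>b\<close> both lie on the
  other side.\<close>
lemma face_excludes_crossing_arc: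
  assumes F: "open F" "connected F" "F \<noteq> {}"
      "F \<inter> (path_image c1 \<union> path_image c2 \<union> path_image a \<union> path_image b) = {}"
      "frontier F = path_image c1 \<union> path_image c2"
    and b: "arc b" "pathstart b \<in> path_image c1 - {p, q}" "pathfinish b \<in> path_image c2 - {p, q}"
      "path_image b \<inter> (path_image c1 \<union> path_image c2) \<subseteq> {pathstart b, pathfinish b}"
      "path_image b \<inter> path_image a = {}"
  shows False
proof -
  let ?C1 = "path_image c1" and ?C2 = "path_image c2" and ?A = "path_image a"
  let ?C = "?C1 \<union> ?C2"
  define B where "B = path_image b - {pathstart b, pathfinish b}"
  have B: "connected B" "B \<inter> (?C \<union> ?A) = {}" "B \<inter> F = {}"
    using arc_interior(1)[OF b(1)] b(4,5) F(4) unfolding B_def by blast+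
  have A: "connected (?A - {p, q})" "(?A - {p, q}) \<inter> ?C = {}" "(?A - {p, q}) \<inter> F = {}"
    using arc_interiors(5) c1_a c2_a F(4) by blast+
  have ends_near_B: "pathstart b \<in> closure B" "pathfinish b \<in> closure B"
    using arc_interior(2)[OF b(1)] unfolding B_def by auto
  have F_side: "F \<subseteq> inside ?C \<or> F \<subseteq> outside ?C"
    using connected_subset_inside_or_outside[OF closed_cycles(1) F(2)] F(4) by blast
  have "B \<subseteq> inside ?C \<and> ?A - {p, q} \<subseteq> inside ?C
    \<or> B \<inter> inside ?C = {} \<and> (?A - {p, q}) \<inter> inside ?C = {}"
  proof (cases "F \<subseteq> inside ?C")
    case True
    then have "F = inside ?C"
      using connected_open_subset_eq[OF Jordan_c1_c2(2) F(1) _ F(3)] F(5) inside_no_overlap[of ?C]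
      by blast
    then show ?thesis using A(3) B(3) by blast
  next
    case False
    then have "F = outside ?C"
      using F_side connected_open_subset_eq[OF Jordan_c1_c2(3) F(1) _ F(3)] F(5)
        outside_no_overlap[of ?C] by blast
    then show ?thesis
      using A(2,3) B(2,3) inside_Un_outside[of ?C] by blast
  qed
  then show False
    using no_connected_set_near_both_arcs[OF B(1) _ b(2) ends_near_B(1) b(3) ends_near_B(2)] B(2)
    by blast
qed

end

section \<open>Drawing paths\<close>

text \<open>Paths are required to have an edge, so that they are drawn as arcs.\<close>
definition is_path :: "'v set \<Rightarrow> 'v set set \<Rightarrow> 'v list \<Rightarrow> bool" where
  "is_path V E xs \<longleftrightarrow> distinct xs \<and> 2 \<le> length xs \<and> set xs \<subseteq> V \<and> walk_edges xs \<subseteq> E"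

lemma is_path_rev [simp]: "is_path V E (rev xs) \<longleftrightarrow> is_path V E xs"
  by (simp add: is_path_def walk_edges_rev)

lemma is_path_ends_in_set: "is_path V E xs \<Longrightarrow> hd xs \<in> set xs \<and> last xs \<in> set xs"
  by (cases xs) (auto simp: is_path_def)

lemma is_path_mono: "is_path V E xs \<Longrightarrow> V \<subseteq> V' \<Longrightarrow> E \<subseteq> E' \<Longrightarrow> is_path V' E' xs"
  by (auto simp: is_path_def)

definition edge_arc ::
  "('v \<Rightarrow> complex) \<Rightarrow> ('v set \<Rightarrow> real \<Rightarrow> complex) \<Rightarrow> 'v \<Rightarrow> 'v \<Rightarrow> real \<Rightarrow> complex" where
  "edge_arc pos \<gamma> x y =
     (if pathstart (\<gamma> {x, y}) = pos x then \<gamma> {x, y} else reversepath (\<gamma> {x, y}))"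

fun walk_arc :: "('v \<Rightarrow> complex) \<Rightarrow> ('v set \<Rightarrow> real \<Rightarrow> complex) \<Rightarrow> 'v list \<Rightarrow> real \<Rightarrow> complex" where
  "walk_arc pos \<gamma> (x # y # z # zs) = edge_arc pos \<gamma> x y +++ walk_arc pos \<gamma> (y # z # zs)"
| "walk_arc pos \<gamma> [x, y] = edge_arc pos \<gamma> x y"
| "walk_arc pos \<gamma> _ = linepath 0 0"

definition edges_image :: "('v set \<Rightarrow> real \<Rightarrow> complex) \<Rightarrow> 'v set set \<Rightarrow> complex set" where
  "edges_image \<gamma> ES = (\<Union>e\<in>ES. path_image (\<gamma> e))"

lemma plane_embedding_edge:
  assumes "plane_embedding V E pos \<gamma>" "e \<in> E"
  shows "arc (\<gamma> e)"
    and "\<exists>u v. e = {u, v} \<and> pathstart (\<gamma> e) = pos u \<and> pathfinish (\<gamma> e) = pos v"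
  using assms by (auto simp: plane_embedding_def)

lemma plane_embedding_edges_Int:
  assumes "plane_embedding V E pos \<gamma>" "e \<in> E" "e' \<in> E" "e \<noteq> e'"
  shows "path_image (\<gamma> e) \<inter> path_image (\<gamma> e') \<subseteq> pos ` (e \<inter> e')"
  using assms by (auto simp: plane_embedding_def)

lemma plane_embedding_endpoint:
  assumes "plane_embedding V E pos \<gamma>" "e \<in> E" "v \<in> e"
  shows "pos v \<in> path_image (\<gamma> e)"
  using plane_embedding_edge(2)[OF assms(1,2)] assms(3)
    pathstart_in_path_image[of "\<gamma> e"] pathfinish_in_path_image[of "\<gamma> e"] by auto

lemma edges_image_Int:
  assumes "plane_embedding V E pos \<gamma>" "ES \<subseteq> E" "ES' \<subseteq> E" "ES \<inter> ES' = {}"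
  shows "edges_image \<gamma> ES \<inter> edges_image \<gamma> ES' \<subseteq> pos ` (\<Union> ES \<inter> \<Union> ES')"
proof
  fix w assume "w \<in> edges_image \<gamma> ES \<inter> edges_image \<gamma> ES'"
  then obtain e e' where "e \<in> ES" "e' \<in> ES'" "w \<in> path_image (\<gamma> e)" "w \<in> path_image (\<gamma> e')"
    by (auto simp: edges_image_def)
  moreover from this have "w \<in> pos ` (e \<inter> e')"
    using plane_embedding_edges_Int[OF assms(1), of e e'] assms(2-4) by blast
  ultimately show "w \<in> pos ` (\<Union> ES \<inter> \<Union> ES')"
    by blast
qed

lemma edge_arc:
  assumes pe: "plane_embedding V E pos \<gamma>" and e: "{x, y} \<in> E" and xy: "x \<noteq> y" "x \<in> V" "y \<in> V"
  shows "arc (edge_arc pos \<gamma> x y)" "pathstart (edge_arc pos \<gamma> x y) = pos x"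
    "pathfinish (edge_arc pos \<gamma> x y) = pos y"
    "path_image (edge_arc pos \<gamma> x y) = path_image (\<gamma> {x, y})"
proof -
  have "pos x \<noteq> pos y"
    using pe xy by (auto simp: plane_embedding_def dest: inj_onD)
  moreover obtain u v where "{x, y} = {u, v}" "pathstart (\<gamma> {x, y}) = pos u"
    "pathfinish (\<gamma> {x, y}) = pos v"
    using plane_embedding_edge(2)[OF pe e] by blast
  ultimately show "arc (edge_arc pos \<gamma> x y)" "pathstart (edge_arc pos \<gamma> x y) = pos x"
    "pathfinish (edge_arc pos \<gamma> x y) = pos y"
    "path_image (edge_arc pos \<gamma> x y) = path_image (\<gamma> {x, y})"
    using plane_embedding_edge(1)[OF pe e] xy(1)
    by (auto simp: edge_arc_def doubleton_eq_iff arc_reversepath)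
qed

lemma walk_arc:
  assumes pe: "plane_embedding V E pos \<gamma>" and "is_path V E xs"
  shows "arc (walk_arc pos \<gamma> xs) \<and> pathstart (walk_arc pos \<gamma> xs) = pos (hd xs)
    \<and> pathfinish (walk_arc pos \<gamma> xs) = pos (last xs)
    \<and> path_image (walk_arc pos \<gamma> xs) = edges_image \<gamma> (walk_edges xs)"
  using assms(2)
proof (induction xs rule: induct_list012)
  case (3 x y zs)
  have xy: "{x, y} \<in> E" "x \<noteq> y" "x \<in> V" "y \<in> V"
    using "3.prems" by (auto simp: is_path_def)
  note first = edge_arc[OF pe xy]
  show ?case
  proof (cases zs)
    case Nil
    then show ?thesis using first by (simp add: edges_image_def)
  next
    case (Cons z zs')
    have "is_path V E (y # zs)"
      using "3.prems" Cons by (auto simp: is_path_def)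
    then have rest: "arc (walk_arc pos \<gamma> (y # zs)) \<and> pathstart (walk_arc pos \<gamma> (y # zs)) = pos y
      \<and> pathfinish (walk_arc pos \<gamma> (y # zs)) = pos (last (y # zs))
      \<and> path_image (walk_arc pos \<gamma> (y # zs)) = edges_image \<gamma> (walk_edges (y # zs))"
      using "3.IH"(2) by simp
    have facts: "{x, y} \<notin> walk_edges (y # zs)" "\<Union> (walk_edges (y # zs)) \<subseteq> set (y # zs)"
      "x \<notin> set (y # zs)" "walk_edges (y # zs) \<subseteq> E"
      using "3.prems" walk_edges_subset_set[of _ "y # zs"] by (auto simp: is_path_def)
    have "edges_image \<gamma> {{x, y}} \<inter> edges_image \<gamma> (walk_edges (y # zs))
        \<subseteq> pos ` (\<Union> {{x, y}} \<inter> \<Union> (walk_edges (y # zs)))"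
      by (rule edges_image_Int[OF pe]) (use facts xy(1) in auto)
    also have "\<dots> \<subseteq> {pos y}"
      using facts by auto
    finally have "path_image (edge_arc pos \<gamma> x y) \<inter> path_image (walk_arc pos \<gamma> (y # zs)) \<subseteq> {pos y}"
      using rest first(4) by (simp add: edges_image_def)
    then have "arc (edge_arc pos \<gamma> x y +++ walk_arc pos \<gamma> (y # zs))"
      using rest first by (intro arc_join) auto
    then show ?thesis
      using rest first Cons by (auto simp: path_image_join edges_image_def)
  qed
qed (auto simp: is_path_def)

lemma vertex_in_walk_arc:
  assumes pe: "plane_embedding V E pos \<gamma>" and xs: "is_path V E xs" and v: "v \<in> set xs"
  shows "pos v \<in> path_image (walk_arc pos \<gamma> xs)"
proof -
  have "v \<in> \<Union> (walk_edges xs)"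
    using walk_edges_cover[of xs] xs v by (simp add: is_path_def)
  then obtain e where e: "e \<in> walk_edges xs" "v \<in> e"
    by blast
  then have "pos v \<in> path_image (\<gamma> e)"
    using plane_embedding_endpoint[OF pe] xs by (auto simp: is_path_def)
  then show ?thesis
    using walk_arc[OF pe xs] e(1) by (auto simp: edges_image_def)
qed

lemma walk_arcs_Int:
  assumes pe: "plane_embedding V E pos \<gamma>" and xs: "is_path V E xs" and ys: "is_path V E ys"
    and disj: "walk_edges xs \<inter> walk_edges ys = {}"
  shows "path_image (walk_arc pos \<gamma> xs) \<inter> path_image (walk_arc pos \<gamma> ys) = pos ` (set xs \<inter> set ys)"
proof
  have "path_image (walk_arc pos \<gamma> xs) \<inter> path_image (walk_arc pos \<gamma> ys)
      \<subseteq> pos ` (\<Union> (walk_edges xs) \<inter> \<Union> (walk_edges ys))"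
    using edges_image_Int[OF pe _ _ disj] walk_arc[OF pe xs] walk_arc[OF pe ys] xs ys
    by (simp add: is_path_def)
  then show "path_image (walk_arc pos \<gamma> xs) \<inter> path_image (walk_arc pos \<gamma> ys) \<subseteq> pos ` (set xs \<inter> set ys)"
    using walk_edges_subset_set[of _ xs] walk_edges_subset_set[of _ ys] by blast
  show "pos ` (set xs \<inter> set ys) \<subseteq> path_image (walk_arc pos \<gamma> xs) \<inter> path_image (walk_arc pos \<gamma> ys)"
    using vertex_in_walk_arc[OF pe xs] vertex_in_walk_arc[OF pe ys] by blast
qed

lemma closed_drawing:
  assumes "simple_graph V E" "plane_embedding V E pos \<gamma>"
  shows "closed (drawing V E pos \<gamma>)"
proof -
  have "finite V" "E \<subseteq> Pow V"
    using assms(1) by (auto simp: simple_graph_def)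
  then have "finite E"
    by (meson finite_Pow_iff finite_subset)
  then have "closed (\<Union>e\<in>E. path_image (\<gamma> e))"
    using plane_embedding_edge(1)[OF assms(2)]
    by (intro closed_UN) (auto intro: closed_path_image arc_imp_path)
  then show ?thesis
    using \<open>finite V\<close> by (simp add: drawing_def closed_Un finite_imp_closed)
qed

lemma walk_arc_subset_drawing:
  assumes "plane_embedding V E pos \<gamma>" "is_path V E xs"
  shows "path_image (walk_arc pos \<gamma> xs) \<subseteq> drawing V E pos \<gamma>"
  using walk_arc[OF assms] assms(2) by (auto simp: edges_image_def drawing_def is_path_def)

lemma theta_graph_walk_arcs:
  assumes pe: "plane_embedding V E pos \<gamma>"
    and paths: "is_path V E L1" "is_path V E L2" "is_path V E P"
    and starts: "hd L1 = x" "hd L2 = x" "hd P = x"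
    and finishes: "last L1 = y" "last L2 = y" "last P = y"
    and vertices: "set L1 \<inter> set L2 = {x, y}" "set L1 \<inter> set P = {x, y}" "set L2 \<inter> set P = {x, y}"
    and edges: "walk_edges L1 \<inter> walk_edges L2 = {}" "walk_edges L1 \<inter> walk_edges P = {}"
      "walk_edges L2 \<inter> walk_edges P = {}"
  shows "theta_graph (pos x) (pos y) (walk_arc pos \<gamma> L1) (walk_arc pos \<gamma> L2) (walk_arc pos \<gamma> P)"
  using walk_arc[OF pe paths(1)] walk_arc[OF pe paths(2)] walk_arc[OF pe paths(3)] starts finishes
    walk_arcs_Int[OF pe paths(1,2) edges(1)] walk_arcs_Int[OF pe paths(1,3) edges(2)]
    walk_arcs_Int[OF pe paths(2,3) edges(3)] vertices
  by unfold_locales simp_all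

lemma face_excludes_crossing_path:
  assumes sg: "simple_graph V E" and pe: "plane_embedding V E pos \<gamma>"
    and F: "F \<in> components (- drawing V E pos \<gamma>)"
    and frontier: "frontier F = edges_image \<gamma> (walk_edges L1 \<union> walk_edges L2)"
    and L1: "is_path V E L1" "hd L1 = x" "last L1 = y"
    and L2: "is_path V E L2" "hd L2 = x" "last L2 = y"
    and L12: "set L1 \<inter> set L2 = {x, y}" "walk_edges L1 \<inter> walk_edges L2 = {}"
    and P: "is_path V E P" "hd P = x" "last P = y"
      "walk_edges P \<inter> (walk_edges L1 \<union> walk_edges L2) = {}"
      "set P \<inter> (set L1 \<union> set L2) \<subseteq> {x, y}"
    and Q: "is_path V E Q" "hd Q \<in> set L1 - {x, y}" "last Q \<in> set L2 - {x, y}"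
      "walk_edges Q \<inter> (walk_edges L1 \<union> walk_edges L2) = {}"
      "set Q \<inter> (set L1 \<union> set L2) \<subseteq> {hd Q, last Q}"
    and PQ: "set P \<inter> set Q = {}"
  shows False
proof -
  define c1 c2 a b where "c1 = walk_arc pos \<gamma> L1" and "c2 = walk_arc pos \<gamma> L2"
    and "a = walk_arc pos \<gamma> P" and "b = walk_arc pos \<gamma> Q"
  have "x \<in> set L1" "y \<in> set L1"
    using is_path_ends_in_set[OF L1(1)] L1 by auto
  then have "set L1 \<inter> set P = {x, y}" "set L2 \<inter> set P = {x, y}"
    using P(5) is_path_ends_in_set[OF P(1)] P(2,3) L12(1) by blast+
  then interpret theta_graph "pos x" "pos y" c1 c2 a
    unfolding c1_def c2_def a_def
    using P(4) by (intro theta_graph_walk_arcs[OF pe L1(1) L2(1) P(1)] L1 L2 P L12) blast+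
  have b: "arc b" "pathstart b = pos (hd Q)" "pathfinish b = pos (last Q)"
    using walk_arc[OF pe Q(1)] by (simp_all add: b_def)
  have QL: "walk_edges Q \<inter> walk_edges L1 = {}" "walk_edges Q \<inter> walk_edges L2 = {}"
    using Q(4) by blast+
  have "hd Q \<in> V" "last Q \<in> V" "x \<in> V" "y \<in> V"
    using Q(1) L1(1) \<open>x \<in> set L1\<close> \<open>y \<in> set L1\<close> is_path_ends_in_set[OF Q(1)]
    by (auto simp: is_path_def)
  then have "pos (hd Q) \<notin> {pos x, pos y}" "pos (last Q) \<notin> {pos x, pos y}"
    using pe Q(2,3) by (auto simp: plane_embedding_def dest: inj_onD)
  then have "pathstart b \<in> path_image c1 - {pos x, pos y}"
    and "pathfinish b \<in> path_image c2 - {pos x, pos y}"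
    using b vertex_in_walk_arc[OF pe L1(1)] vertex_in_walk_arc[OF pe L2(1)] Q(2,3)
    by (auto simp: c1_def c2_def)
  moreover have "path_image b \<inter> (path_image c1 \<union> path_image c2) \<subseteq> {pathstart b, pathfinish b}"
    using walk_arcs_Int[OF pe Q(1) L1(1) QL(1)] walk_arcs_Int[OF pe Q(1) L2(1) QL(2)] Q(5) b
    by (auto simp: b_def c1_def c2_def)
  moreover have "path_image b \<inter> path_image a = {}"
    using walk_arcs_Int[OF pe Q(1) P(1)] walk_edges_disjoint[of Q P] PQ
    by (auto simp: a_def b_def)
  moreover have "open F"
    using open_components[OF _ F] closed_drawing[OF sg pe] by (simp add: open_Compl)
  moreover have "F \<inter> (path_image c1 \<union> path_image c2 \<union> path_image a \<union> path_image b) = {}"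
    using in_components_subset[OF F] walk_arc_subset_drawing[OF pe] L1(1) L2(1) P(1) Q(1)
    unfolding c1_def c2_def a_def b_def by blast
  moreover have "frontier F = path_image c1 \<union> path_image c2"
    using frontier walk_arc[OF pe L1(1)] walk_arc[OF pe L2(1)]
    by (simp add: c1_def c2_def edges_image_def)
  ultimately show False
    using face_excludes_crossing_arc in_components_connected[OF F] in_components_nonempty[OF F] b(1)
    by blast
qed

section \<open>The two arcs of the boundary cycle\<close>

lemma walk_edges_map: "walk_edges (map f xs) = image f ` walk_edges xs"
  by (induction xs rule: walk_edges.induct) auto

lemma distinct_ends_edge_length:
  assumes "distinct xs" "{hd xs, last xs} \<in> walk_edges xs"
  shows "length xs = 2"
proof -
  obtain i where i: "{hd xs, last xs} = {xs ! i, xs ! Suc i}" "Suc i < length xs"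
    using assms(2) unfolding walk_edges_conv_nth by blast
  have "xs \<noteq> []"
    using i(2) by auto
  then have "hd xs = xs ! 0" "last xs = xs ! (length xs - 1)"
    by (simp_all add: hd_conv_nth last_conv_nth)
  then have "xs ! 0 = xs ! i \<and> xs ! (length xs - 1) = xs ! Suc i
      \<or> xs ! 0 = xs ! Suc i"
    using i(1) by (auto simp: doubleton_eq_iff)
  then show ?thesis
  proof
    assume ends: "xs ! 0 = xs ! i \<and> xs ! (length xs - 1) = xs ! Suc i"
    then have "0 = i"
      using i(2) nth_eq_iff_index_eq[OF assms(1), of 0 i] \<open>xs \<noteq> []\<close> by simp
    moreover have "length xs - 1 = Suc i"
      using ends i(2) by (simp add: nth_eq_iff_index_eq[OF assms(1)])
    ultimately show ?thesis by simp
  next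
    assume "xs ! 0 = xs ! Suc i"
    then show ?thesis
      using i(2) nth_eq_iff_index_eq[OF assms(1), of 0 "Suc i"] \<open>xs \<noteq> []\<close> by simp
  qed
qed

lemma cycle_edges_conv_walk_edges:
  assumes "cs \<noteq> []"
  shows "cycle_edges cs = walk_edges (cs @ [cs ! 0])"
proof -
  have "(cs @ [cs ! 0]) ! i = cs ! i" "(cs @ [cs ! 0]) ! Suc i = cs ! (Suc i mod length cs)"
    if "i < length cs" for i
  proof -
    show "(cs @ [cs ! 0]) ! i = cs ! i"
      using that by (simp add: nth_append)
    show "(cs @ [cs ! 0]) ! Suc i = cs ! (Suc i mod length cs)"
    proof (cases "Suc i < length cs")
      case False
      then have "Suc i = length cs" using that by simp
      then show ?thesis by (simp add: nth_append)
    qed (simp add: nth_append)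
  qed
  then have "{cs ! i, cs ! (Suc i mod length cs)} = {(cs @ [cs ! 0]) ! i, (cs @ [cs ! 0]) ! Suc i}"
    if "i < length cs" for i
    using that by simp
  then show ?thesis
    unfolding cycle_edges_def walk_edges_conv_nth by (auto simp del: nth_append_length)
qed

lemma walk_edges_upt_split:
  assumes "i \<le> j" "j < k"
  shows "walk_edges ([i..<k] @ ys) = walk_edges [i..<Suc j] \<union> walk_edges ([j..<k] @ ys)"
proof -
  have "[i..<k] = [i..<j] @ j # [Suc j..<k]"
    using assms upt_add_eq_append[of i j "k - j"] by (simp add: upt_conv_Cons)
  then have "walk_edges ([i..<k] @ ys)
      = walk_edges ([i..<j] @ [j]) \<union> walk_edges (j # [Suc j..<k] @ ys)"
    using walk_edges_append[of "[i..<j]" j "[Suc j..<k] @ ys"] by simp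
  then show ?thesis
    using assms by (simp add: upt_conv_Cons)
qed

lemma walk_edge_two_elements:
  assumes "distinct xs" "e \<in> walk_edges xs" "e \<subseteq> {u, v}"
  shows "e = {u, v}"
proof -
  obtain i where "e = {xs ! i, xs ! Suc i}" "Suc i < length xs"
    using assms(2) unfolding walk_edges_conv_nth by blast
  moreover have "xs ! i \<noteq> xs ! Suc i"
    using calculation(2) nth_eq_iff_index_eq[OF assms(1), of i "Suc i"] by simp
  ultimately show ?thesis
    using assms(3) by auto
qed

locale cycle_split =
  fixes cs :: "'v list" and lo hi :: nat
  assumes distinct: "distinct cs" and length: "3 \<le> length cs"
    and lo_hi: "lo < hi" "hi < length cs"
begin

definition L1 :: "'v list" where "L1 = map ((!) cs) [lo..<Suc hi]"

definition L2 :: "'v list" where "L2 = map ((!) cs) ([hi..<length cs] @ [0..<Suc lo])"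

lemma nth_inj: "inj_on ((!) cs) {..<length cs}"
  using inj_on_nth[OF distinct] by simp

lemma sets: "set L1 = (!) cs ` {lo..hi}" "set L2 = (!) cs ` ({hi..<length cs} \<union> {..lo})"
  by (simp_all add: L1_def L2_def atLeastLessThanSuc_atLeastAtMost atLeast0LessThan
      atLeast0AtMost image_Un del: upt_Suc)

lemma ends: "hd L1 = cs ! lo" "last L1 = cs ! hi" "hd L2 = cs ! hi" "last L2 = cs ! lo"
  using lo_hi by (simp_all add: L1_def L2_def upt_conv_Cons)

lemma sets_Int: "set L1 \<inter> set L2 = {cs ! lo, cs ! hi}"
proof -
  have "set L1 \<inter> set L2 = (!) cs ` ({lo..hi} \<inter> ({hi..<length cs} \<union> {..lo}))"
    unfolding sets using lo_hi by (intro inj_on_image_Int[OF nth_inj, symmetric]) auto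
  also have "{lo..hi} \<inter> ({hi..<length cs} \<union> {..lo}) = {lo, hi}"
    using lo_hi by auto
  finally show ?thesis by simp
qed

lemma sets_Un: "set L1 \<union> set L2 = set cs"
proof -
  have "{lo..hi} \<union> ({hi..<length cs} \<union> {..lo}) = {..<length cs}"
    using lo_hi by auto
  then show ?thesis
    unfolding sets image_Un[symmetric] by (simp add: lessThan_atLeast0 nth_image)
qed

lemma edges_Un: "walk_edges L1 \<union> walk_edges L2 = cycle_edges cs"
proof -
  let ?n = "length cs"
  have "walk_edges ([0..<?n] @ [0]) = walk_edges [0..<Suc lo] \<union> walk_edges ([lo..<?n] @ [0])"
    using lo_hi by (intro walk_edges_upt_split) auto
  also have "walk_edges ([lo..<?n] @ [0]) = walk_edges [lo..<Suc hi] \<union> walk_edges ([hi..<?n] @ [0])"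
    using lo_hi by (intro walk_edges_upt_split) auto
  finally have cycle: "walk_edges ([0..<?n] @ [0])
      = walk_edges [lo..<Suc hi] \<union> (walk_edges ([hi..<?n] @ [0]) \<union> walk_edges [0..<Suc lo])"
    by blast
  have L2_edges: "walk_edges ([hi..<?n] @ [0..<Suc lo])
      = walk_edges ([hi..<?n] @ [0]) \<union> walk_edges [0..<Suc lo]"
    using walk_edges_append[of "[hi..<?n]" 0 "[Suc 0..<Suc lo]"]
    by (simp add: upt_conv_Cons del: upt_Suc)
  have "cs \<noteq> []" "cs @ [cs ! 0] = map ((!) cs) ([0..<?n] @ [0])"
    using length by (auto simp: map_nth)
  then have "cycle_edges cs = image ((!) cs) ` walk_edges ([0..<?n] @ [0])"
    by (metis cycle_edges_conv_walk_edges walk_edges_map)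
  also have "\<dots>
      = image ((!) cs) ` (walk_edges [lo..<Suc hi] \<union> walk_edges ([hi..<?n] @ [0..<Suc lo]))"
    unfolding cycle L2_edges by (simp only: Un_assoc)
  also have "\<dots> = walk_edges L1 \<union> walk_edges L2"
    unfolding L1_def L2_def walk_edges_map image_Un ..
  finally show ?thesis ..
qed

lemma paths: "is_path (set cs) (cycle_edges cs) L1" "is_path (set cs) (cycle_edges cs) L2"
proof -
  have "inj_on ((!) cs) (set [lo..<Suc hi])"
    "inj_on ((!) cs) (set ([hi..<length cs] @ [0..<Suc lo]))"
    using lo_hi by (auto simp del: upt_Suc intro: inj_on_subset[OF nth_inj])
  moreover have "distinct [lo..<Suc hi]" "distinct ([hi..<length cs] @ [0..<Suc lo])"
    using lo_hi by (auto simp del: upt_Suc)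
  ultimately have "distinct L1" "distinct L2"
    unfolding L1_def L2_def using distinct_map by blast+
  moreover have "set L1 \<subseteq> set cs" "set L2 \<subseteq> set cs"
    using lo_hi by (auto simp: sets)
  moreover have "2 \<le> length L1" "2 \<le> length L2"
    using lo_hi by (simp_all add: L1_def L2_def)
  ultimately show "is_path (set cs) (cycle_edges cs) L1" "is_path (set cs) (cycle_edges cs) L2"
    using edges_Un unfolding is_path_def by blast+
qed

text \<open>A common edge would join the ends of both arcs, so both would be single edges and the
  cycle would have only two vertices.\<close>
lemma edges_disjoint: "walk_edges L1 \<inter> walk_edges L2 = {}"
proof (rule ccontr)
  assume "walk_edges L1 \<inter> walk_edges L2 \<noteq> {}"
  then obtain e where e: "e \<in> walk_edges L1" "e \<in> walk_edges L2"
    by blast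
  then have "e \<subseteq> {cs ! lo, cs ! hi}"
    using walk_edges_subset_set sets_Int by blast
  then have "e = {hd L1, last L1}" "e = {hd L2, last L2}"
    using walk_edge_two_elements[OF _ e(1)] paths(1) ends by (auto simp: is_path_def insert_commute)
  then have "length L1 = 2" "length L2 = 2"
    using distinct_ends_edge_length[of L1] distinct_ends_edge_length[of L2] paths e
    by (auto simp: is_path_def)
  then show False
    using length lo_hi by (simp add: L1_def L2_def)
qed

end

lemma (in cycle_split) drawing_eq:
  assumes pe: "plane_embedding V E pos \<gamma>" and "set cs \<subseteq> V" "cycle_edges cs \<subseteq> E"
  shows "drawing (set cs) (cycle_edges cs) pos \<gamma> = edges_image \<gamma> (walk_edges L1 \<union> walk_edges L2)"
proof -
  have paths': "is_path V E L1" "is_path V E L2"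
    using paths assms(2,3) by (auto intro: is_path_mono)
  have "pos ` set cs \<subseteq> path_image (walk_arc pos \<gamma> L1) \<union> path_image (walk_arc pos \<gamma> L2)"
    using vertex_in_walk_arc[OF pe paths'(1)] vertex_in_walk_arc[OF pe paths'(2)] sets_Un
    by blast
  then have "pos ` set cs \<subseteq> edges_image \<gamma> (walk_edges L1 \<union> walk_edges L2)"
    using walk_arc[OF pe paths'(1)] walk_arc[OF pe paths'(2)] by (simp add: edges_image_def)
  then show ?thesis
    using edges_Un by (auto simp: drawing_def edges_image_def)
qed

section \<open>Walks across a face\<close>

text \<open>\<open>k\<close> is the first index with \<open>xs ! k \<in> A - T\<close> and \<open>j\<close> the last index of \<open>A\<close> before it.\<close>
lemma exit_indices:
  assumes "xs \<noteq> []" "hd xs \<in> A \<inter> T" "last xs \<in> A - T"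
  obtains j k where "j < k" "k < length xs" "xs ! j \<in> A \<inter> T" "xs ! k \<in> A - T"
    "\<And>m. j < m \<Longrightarrow> m < k \<Longrightarrow> xs ! m \<notin> A"
proof -
  let ?leaves = "\<lambda>k. k < length xs \<and> xs ! k \<in> A - T"
  define k where "k = (LEAST k. ?leaves k)"
  have "?leaves (length xs - 1)"
    using assms(1,3) by (simp add: last_conv_nth)
  then have k: "?leaves k"
    unfolding k_def by (rule LeastI)
  have k_least: "k \<le> m" if "?leaves m" for m
    unfolding k_def using that by (rule Least_le)
  have "xs ! 0 \<in> A \<inter> T"
    using assms(1,2) by (simp add: hd_conv_nth)
  then have "0 < k"
    using k by (cases k) auto
  define M where "M = {m. m < k \<and> xs ! m \<in> A}"
  have "finite M" "0 \<in> M"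
    using \<open>0 < k\<close> \<open>xs ! 0 \<in> A \<inter> T\<close> by (auto simp: M_def)
  then have "Max M \<in> M" and M_max: "\<And>m. m \<in> M \<Longrightarrow> m \<le> Max M"
    by (auto intro: Max_in)
  then have "Max M < k" "xs ! Max M \<in> A"
    by (auto simp: M_def)
  moreover have "xs ! Max M \<in> T"
    using k k_least[of "Max M"] calculation by (cases "xs ! Max M \<in> T") auto
  moreover have "xs ! m \<notin> A" if "Max M < m" "m < k" for m
  proof
    assume "xs ! m \<in> A"
    then have "m \<in> M"
      using that(2) by (simp add: M_def)
    then show False
      using M_max that(1) by fastforce
  qed
  ultimately show thesis
    using that[of "Max M" k] k by blast
qed

lemma subpath_leaving:
  assumes "distinct xs" "xs \<noteq> []" "hd xs \<in> A \<inter> T" "last xs \<in> A - T"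
  obtains ys where "distinct ys" "2 \<le> length ys" "set ys \<subseteq> set xs"
    "walk_edges ys \<subseteq> walk_edges xs" "hd ys \<in> A \<inter> T" "last ys \<in> A - T"
    "set ys \<inter> A \<subseteq> {hd ys, last ys}"
proof -
  obtain j k where jk: "j < k" "k < length xs" "xs ! j \<in> A \<inter> T" "xs ! k \<in> A - T"
    and between: "\<And>m. j < m \<Longrightarrow> m < k \<Longrightarrow> xs ! m \<notin> A"
    using exit_indices[OF assms(2-4)] by blast
  define ys where "ys = take (Suc k - j) (drop j xs)"
  have len: "length ys = Suc k - j" and nth: "\<And>t. t < Suc k - j \<Longrightarrow> ys ! t = xs ! (j + t)"
    using jk by (auto simp: ys_def)
  moreover have "ys \<noteq> []"
    using len jk(1) by auto
  ultimately have ends: "hd ys = xs ! j" "last ys = xs ! k"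
    using jk(1) by (simp_all add: hd_conv_nth last_conv_nth)
  show thesis
  proof
    show "distinct ys" "2 \<le> length ys" "set ys \<subseteq> set xs"
      using assms(1) len jk(1) by (auto simp: ys_def dest: in_set_takeD in_set_dropD)
    show "walk_edges ys \<subseteq> walk_edges xs"
      unfolding ys_def using walk_edges_take walk_edges_drop by (rule subset_trans)
    show "hd ys \<in> A \<inter> T" "last ys \<in> A - T"
      using ends jk by auto
    show "set ys \<inter> A \<subseteq> {hd ys, last ys}"
    proof
      fix v assume "v \<in> set ys \<inter> A"
      then obtain t where "t < Suc k - j" "v = xs ! (j + t)" "v \<in> A"
        using len nth by (auto simp: in_set_conv_nth)
      moreover have "j + t \<le> k"
        using \<open>t < Suc k - j\<close> jk(1) by arith
      ultimately show "v \<in> {hd ys, last ys}"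
        using between[of "j + t"] ends by (cases "t = 0 \<or> j + t = k") auto
    qed
  qed
qed

lemma subpath_leaving_interval:
  assumes cs: "distinct cs" "hi < length cs"
    and W: "distinct W" "W \<noteq> []" "hd W = cs ! u" "last W = cs ! v"
    and uv: "lo < u" "u < hi" "v < length cs" "v < lo \<or> hi < v"
    and avoid: "cs ! lo \<notin> set W" "cs ! hi \<notin> set W"
  obtains r s Q where "lo < r" "r < hi" "s < length cs" "s < lo \<or> hi < s"
    "hd Q = cs ! r" "last Q = cs ! s" "distinct Q" "2 \<le> length Q" "set Q \<subseteq> set W"
    "walk_edges Q \<subseteq> walk_edges W" "set Q \<inter> set cs \<subseteq> {hd Q, last Q}"
proof -
  let ?T = "(!) cs ` {lo<..<hi}"
  have inj: "inj_on ((!) cs) {..<length cs}"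
    using inj_on_nth[OF cs(1)] by simp
  have "cs ! v \<notin> ?T"
  proof
    assume "cs ! v \<in> ?T"
    then obtain w where w: "lo < w" "w < hi" "cs ! v = cs ! w"
      by auto
    then have "v = w"
      using inj_onD[OF inj w(3)] uv(3) cs(2) by simp
    then show False
      using uv(4) w by simp
  qed
  moreover have "cs ! u \<in> ?T" "cs ! u \<in> set cs" "cs ! v \<in> set cs"
    using uv cs(2) by auto
  ultimately have "hd W \<in> set cs \<inter> ?T" "last W \<in> set cs - ?T"
    using W(3,4) by simp_all
  then obtain Q where Q: "distinct Q" "2 \<le> length Q" "set Q \<subseteq> set W"
    "walk_edges Q \<subseteq> walk_edges W" "hd Q \<in> set cs \<inter> ?T" "last Q \<in> set cs - ?T"
    "set Q \<inter> set cs \<subseteq> {hd Q, last Q}"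
    by (rule subpath_leaving[OF W(1,2)])
  obtain r where r: "lo < r" "r < hi" "hd Q = cs ! r"
    using Q(5) by auto
  obtain s where s: "s < length cs" "last Q = cs ! s"
    using Q(6) by (auto simp: in_set_conv_nth)
  have "last Q \<in> set W"
    using Q(2,3) last_in_set[of Q] by fastforce
  then have "s \<noteq> lo" "s \<noteq> hi"
    using s(2) avoid by auto
  moreover have "\<not> (lo < s \<and> s < hi)"
    using Q(6) s(2) by auto
  ultimately have "s < lo \<or> hi < s"
    by arith
  then show thesis
    by (rule that[OF r(1,2) s(1) _ r(3) s(2) Q(1-4) Q(7)])
qed

lemma walk_contains_separating_chord:
  assumes cs: "distinct cs" and ord: "i1 < i2" "i2 < i3" "i3 < i4" "i4 < length cs"
    and W: "distinct W" "W \<noteq> []" "hd W = cs ! i1" "last W = cs ! i3"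
    and avoid: "cs ! i2 \<notin> set W" "cs ! i4 \<notin> set W"
  obtains lo hi P where "lo < hi" "hi < length cs" "hd P = cs ! lo" "last P = cs ! hi"
    "distinct P" "2 \<le> length P" "set P \<subseteq> set W" "walk_edges P \<subseteq> walk_edges W"
    "set P \<inter> set cs \<subseteq> {hd P, last P}"
    "lo < i2 \<and> i2 < hi \<and> hi < i4 \<or> i2 < lo \<and> lo < i4 \<and> i4 < hi"
proof -
  have "distinct (rev W)" "rev W \<noteq> []" "hd (rev W) = cs ! i3" "last (rev W) = cs ! i1"
    using W by (simp_all add: hd_rev last_rev)
  then obtain r s P where P: "i2 < r" "r < i4" "s < length cs" "s < i2 \<or> i4 < s"
    "hd P = cs ! r" "last P = cs ! s" "distinct P" "2 \<le> length P" "set P \<subseteq> set W"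
    "walk_edges P \<subseteq> walk_edges W" "set P \<inter> set cs \<subseteq> {hd P, last P}"
    by (rule subpath_leaving_interval[OF cs ord(4)]) (use ord avoid in \<open>auto simp: walk_edges_rev\<close>)
  show thesis
  proof (cases "s < i2")
    case True
    show thesis
      by (rule that[of s r "rev P"]) (use True P ord in \<open>auto simp: hd_rev last_rev walk_edges_rev\<close>)
  next
    case False
    show thesis
      by (rule that[of r s P]) (use False P ord in auto)
  qed
qed

lemma face_excludes_crossing_chords:
  assumes sg: "simple_graph V E" and pe: "plane_embedding V E pos \<gamma>"
    and face: "face_bounded_by_cycle V E pos \<gamma> F cs"
    and lo_hi: "lo < hi" "hi < length cs"
    and P: "is_path V E P" "hd P = cs ! lo" "last P = cs ! hi"
      "walk_edges P \<inter> cycle_edges cs = {}" "set P \<inter> set cs \<subseteq> {hd P, last P}"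
    and Q: "is_path V E Q" "hd Q = cs ! r" "last Q = cs ! s" "lo < r" "r < hi" "s < length cs"
      "s < lo \<or> hi < s" "walk_edges Q \<inter> cycle_edges cs = {}" "set Q \<inter> set cs \<subseteq> {hd Q, last Q}"
    and PQ: "set P \<inter> set Q = {}"
  shows False
proof -
  have F: "F \<in> components (- drawing V E pos \<gamma>)"
    and frontier: "frontier F = drawing (set cs) (cycle_edges cs) pos \<gamma>"
    and cycle: "3 \<le> length cs" "distinct cs" "set cs \<subseteq> V" "cycle_edges cs \<subseteq> E"
    using face by (auto simp: face_bounded_by_cycle_def is_cycle_def)
  interpret cycle_split cs lo hi
    using cycle lo_hi by unfold_locales
  have L1: "is_path V E L1" and L2: "is_path V E (rev L2)"
    using paths cycle(3,4) by (auto intro: is_path_mono)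
  have "cs ! r \<noteq> cs ! lo" "cs ! r \<noteq> cs ! hi" "cs ! s \<noteq> cs ! lo" "cs ! s \<noteq> cs ! hi"
    using inj_onD[OF nth_inj, of r lo] inj_onD[OF nth_inj, of r hi] inj_onD[OF nth_inj, of s lo]
      inj_onD[OF nth_inj, of s hi] Q(4-7) lo_hi by auto
  then have Q_ends: "hd Q \<in> set L1 - {cs ! lo, cs ! hi}"
    "last Q \<in> set (rev L2) - {cs ! lo, cs ! hi}"
    using Q(2-7) by (auto simp: sets)
  have L12: "set L1 \<inter> set (rev L2) = {cs ! lo, cs ! hi}"
    "walk_edges L1 \<inter> walk_edges (rev L2) = {}"
    using sets_Int edges_disjoint by (simp_all add: walk_edges_rev)
  have cycle_parts: "set L1 \<union> set (rev L2) = set cs"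
    "walk_edges L1 \<union> walk_edges (rev L2) = cycle_edges cs"
    using sets_Un edges_Un by (simp_all add: walk_edges_rev)
  have "frontier F = edges_image \<gamma> (walk_edges L1 \<union> walk_edges (rev L2))"
    using frontier drawing_eq[OF pe cycle(3,4)] by (simp add: walk_edges_rev)
  then show False
    using face_excludes_crossing_path[OF sg pe F _ L1 ends(1,2) L2 _ _ L12 P(1-3) _ _ Q(1) Q_ends
        _ _ PQ]
      P(2-5) Q(8,9) ends(3,4) cycle_parts by (simp add: hd_rev last_rev)
qed

lemma face_walks_meet:
  assumes sg: "simple_graph V E" and pe: "plane_embedding V E pos \<gamma>"
    and face: "face_bounded_by_cycle V E pos \<gamma> F cs"
    and ord: "i1 < i2" "i2 < i3" "i3 < i4" "i4 < length cs"
    and W13: "is_walk V (E - cycle_edges cs) W13" "distinct W13"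
      "hd W13 = cs ! i1" "last W13 = cs ! i3"
    and W24: "is_walk V (E - cycle_edges cs) W24" "distinct W24"
      "hd W24 = cs ! i2" "last W24 = cs ! i4"
  shows "set W13 \<inter> set W24 \<noteq> {}"
proof
  assume disjoint: "set W13 \<inter> set W24 = {}"
  have cycle: "distinct cs"
    using face by (simp add: face_bounded_by_cycle_def is_cycle_def)
  have walks: "W13 \<noteq> []" "set W13 \<subseteq> V" "walk_edges W13 \<subseteq> E - cycle_edges cs"
    "W24 \<noteq> []" "set W24 \<subseteq> V" "walk_edges W24 \<subseteq> E - cycle_edges cs"
    using W13(1) W24(1) by (auto simp: is_walk_iff)
  have "cs ! i2 \<in> set W24" "cs ! i4 \<in> set W24"
    using W24(3,4) walks(4) hd_in_set last_in_set by metis+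
  then obtain lo hi P where lo_hi: "lo < hi" "hi < length cs"
    and P: "hd P = cs ! lo" "last P = cs ! hi" "distinct P" "2 \<le> length P" "set P \<subseteq> set W13"
      "walk_edges P \<subseteq> walk_edges W13" "set P \<inter> set cs \<subseteq> {hd P, last P}"
    and separates: "lo < i2 \<and> i2 < hi \<and> hi < i4 \<or> i2 < lo \<and> lo < i4 \<and> i4 < hi"
    using walk_contains_separating_chord[OF cycle ord W13(2) walks(1) W13(3,4)] disjoint
    by blast
  have "P \<noteq> []"
    using P(4) by auto
  then have avoid: "cs ! lo \<notin> set W24" "cs ! hi \<notin> set W24"
    using P(1,2,5) disjoint hd_in_set[of P] last_in_set[of P] by auto
  obtain r s Q where Q: "lo < r" "r < hi" "s < length cs" "s < lo \<or> hi < s"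
    "hd Q = cs ! r" "last Q = cs ! s" "distinct Q" "2 \<le> length Q" "set Q \<subseteq> set W24"
    "walk_edges Q \<subseteq> walk_edges W24" "set Q \<inter> set cs \<subseteq> {hd Q, last Q}"
  proof (cases "lo < i2 \<and> i2 < hi \<and> hi < i4")
    case True
    show thesis
      by (rule subpath_leaving_interval[where lo = lo, OF cycle lo_hi(2) W24(2) walks(4) W24(3,4)])
        (use True ord avoid that in blast)+
  next
    case False
    then have "i2 < lo" "lo < i4" "i4 < hi"
      using separates by auto
    have rev_W24: "distinct (rev W24)" "rev W24 \<noteq> []" "hd (rev W24) = cs ! i4"
      "last (rev W24) = cs ! i2"
      using W24 walks(4) by (simp_all add: hd_rev last_rev)
    show thesis
      by (rule subpath_leaving_interval[where lo = lo, OF cycle lo_hi(2) rev_W24])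
        (use \<open>i2 < lo\<close> \<open>lo < i4\<close> \<open>i4 < hi\<close> ord avoid that in \<open>simp_all add: walk_edges_rev\<close>)
  qed
  have "is_path V E P" "walk_edges P \<inter> cycle_edges cs = {}"
    "is_path V E Q" "walk_edges Q \<inter> cycle_edges cs = {}"
    using P Q walks by (auto simp: is_path_def)
  moreover have "set P \<inter> set Q = {}"
    using P(5) Q(9) disjoint by blast
  ultimately show False
    using face_excludes_crossing_chords[OF sg pe face lo_hi] P(1,2,7) Q(1-6,11) by blast
qed

theorem proposition17:
  fixes V :: "'v set" and E :: "'v set set" and pos :: "'v \<Rightarrow> complex"
    and \<gamma> :: "'v set \<Rightarrow> real \<Rightarrow> complex" and F :: "complex set" and cs :: "'v list"
    and i1 i2 i3 i4 :: nat
  assumes "simple_graph V E"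
    and "plane_embedding V E pos \<gamma>"
    and "face_bounded_by_cycle V E pos \<gamma> F cs"
    and "i1 < i2" and "i2 < i3" and "i3 < i4" and "i4 < length cs"
    and "max (graph_dist V (E - cycle_edges cs) (cs ! i1) (cs ! i3))
             (graph_dist V (E - cycle_edges cs) (cs ! i2) (cs ! i4)) \<le> 6"
  shows "min (graph_dist V (E - cycle_edges cs) (cs ! i1) (cs ! i2))
             (graph_dist V (E - cycle_edges cs) (cs ! i3) (cs ! i4)) \<le> 6"
proof -
  let ?d = "graph_dist V (E - cycle_edges cs)"
  have bounded: "?d (cs ! i1) (cs ! i3) \<le> 6" "?d (cs ! i2) (cs ! i4) \<le> 6"
    using assms(8) by simp_all
  then have "?d (cs ! i1) (cs ! i3) \<noteq> \<infinity>" "?d (cs ! i2) (cs ! i4) \<noteq> \<infinity>"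
    by (metis infinity_ileE numeral_eq_enat)+
  then obtain W13 W24 where W13: "is_walk V (E - cycle_edges cs) W13" "hd W13 = cs ! i1"
      "last W13 = cs ! i3" "?d (cs ! i1) (cs ! i3) = enat (length W13 - 1)"
    and W24: "is_walk V (E - cycle_edges cs) W24" "hd W24 = cs ! i2"
      "last W24 = cs ! i4" "?d (cs ! i2) (cs ! i4) = enat (length W24 - 1)"
    by (meson shortest_walk)
  have "distinct W13" "distinct W24"
    using shortest_walk_distinct[OF W13(1)] shortest_walk_distinct[OF W24(1)] W13 W24 by simp_all
  then obtain w where "w \<in> set W13" "w \<in> set W24"
    using face_walks_meet[OF assms(1-7) W13(1) _ W13(2,3) W24(1) _ W24(2,3)] by blast
  then have "?d (cs ! i1) (cs ! i2) + ?d (cs ! i3) (cs ! i4)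
      \<le> enat (length W13 - 1) + enat (length W24 - 1)"
    using graph_dist_meeting_walks[OF W13(1) W24(1)] W13(2,3) W24(2,3) by metis
  also have "\<dots> \<le> 6 + 6"
    using add_mono[OF bounded] W13(4) W24(4) by simp
  finally show ?thesis
    by (rule enat_min_le_if_add_le)
qed

end
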